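(* Let $0<i_1<i_2<\cdots<i_L$ be integers, $\mathcal S=\{x_0,x_{i_1},\ldots,x_{i_L}\}$, and let $d_{RRA}^{\mathcal S}$ be the corresponding restricted right-arm rotation distance. Let $T_1,T_2$ be finite rooted binary trees each with $n$ nodes, $n\ge3$, such that $d_{RRA}^{\mathcal S}(T_1,T_2)$ is defined. Then $d_{RRA}^{\mathcal S}(T_1,T_2)\le 4n-8$.
   Context: Trees: finite rooted binary trees, each internal vertex (node) having a left and a right child. The right arm consists of the root and all nodes reachable from the root by a path of right edges; the level of a node is its distance (number of edges) from the root. Right rotation at a node $N$ whose left child $M$ is a node (with $A,B$ the left and right subtrees of $M$, $C$ the right subtree of $N$) replaces the subtree at $N$ by one whose root has left subtree $A$ and whose right child is a node with left subtree $B$ and right subtree $C$; left rotation at $N$ is the inverse operation. Rotations do not change the number of nodes. For $\mathcal S=\{x_0,x_{i_1},\ldots,x_{i_L}\}$, $d_{RRA}^{\mathcal S}(T_1,T_2)$ is the minimal number of rotations, each performed at a node on the right arm at one of the levels $0,i_1,\ldots,i_L$, required to transform $T_1$ into $T_2$; it is defined when such a sequence of rotations exists. *)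

theory Defs
  imports Main
begin

datatype tree = Leaf | Node tree tree

fun nodes :: "tree \<Rightarrow> nat" where
  "nodes Leaf = 0"
| "nodes (Node l r) = Suc (nodes l + nodes r)"

fun rotR :: "tree \<Rightarrow> tree option" where
  "rotR (Node (Node A B) C) = Some (Node A (Node B C))"
| "rotR _ = None"

fun rotL :: "tree \<Rightarrow> tree option" where
  "rotL (Node A (Node B C)) = Some (Node (Node A B) C)"
| "rotL _ = None"

fun at_arm :: "nat \<Rightarrow> (tree \<Rightarrow> tree option) \<Rightarrow> tree \<Rightarrow> tree option" where
  "at_arm 0 f t = f t"
| "at_arm (Suc k) f Leaf = None"
| "at_arm (Suc k) f (Node l r) = map_option (Node l) (at_arm k f r)"

definition rra_step :: "nat set \<Rightarrow> tree \<Rightarrow> tree \<Rightarrow> bool" where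
  "rra_step Ls T T' \<longleftrightarrow>
     (\<exists>k\<in>Ls. at_arm k rotR T = Some T' \<or> at_arm k rotL T = Some T')"

text \<open>d_RRA^S(T1,T2) is defined iff T2 is reachable from T1.\<close>
definition rra_defined :: "nat set \<Rightarrow> tree \<Rightarrow> tree \<Rightarrow> bool" where
  "rra_defined Ls T1 T2 \<longleftrightarrow> (\<exists>m. (rra_step Ls ^^ m) T1 T2)"

definition d_RRA :: "nat set \<Rightarrow> tree \<Rightarrow> tree \<Rightarrow> nat" where
  "d_RRA Ls T1 T2 = (LEAST m. (rra_step Ls ^^ m) T1 T2)"

end

theory Submission
  imports Defs
begin

text \<open>Record a tree
  Node a r as the word D of subtrees hanging off the path that climbs the left arm of a, passes
  the root and descends the right arm, together with the position p of the root on that path.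
  Rotations at the root only move p, while a rotation at level j > 0 changes D at positions
  p + j - 1 and beyond; so the first k - 1 letters of D are invariant under the allowed
  rotations. Conversely, root rotations and right rotations at level k drive every tree with
  n nodes to a normal form determined by n and that prefix within 2n - 4 steps: move the root
  to the bottom of the left arm, then repeatedly split the subtree at level k, or, when it is a
  leaf, advance the root by a left rotation. Joining two such paths gives 4n - 8.\<close>

lemma nodes_eq_0_iff [simp]: "nodes t = 0 \<longleftrightarrow> t = Leaf"
  by (cases t) auto

fun arm_lefts :: "tree \<Rightarrow> tree list" where
  "arm_lefts Leaf = []"
| "arm_lefts (Node l r) = l # arm_lefts r"

definition arm_tree :: "tree list \<Rightarrow> tree" where
  "arm_tree xs = foldr Node xs Leaf"

lemma arm_tree_simps [simp]:
  "arm_tree [] = Leaf"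
  "arm_tree (x # xs) = Node x (arm_tree xs)"
  by (simp_all add: arm_tree_def)

lemma arm_tree_arm_lefts [simp]: "arm_tree (arm_lefts t) = t"
  by (induction t) auto

fun left_arm_rights :: "tree \<Rightarrow> tree list" where
  "left_arm_rights Leaf = []"
| "left_arm_rights (Node l r) = left_arm_rights l @ [r]"

lemma foldl_Node_left_arm_rights [simp]: "foldl Node Leaf (left_arm_rights t) = t"
  by (induction t) auto

fun root_word :: "tree \<Rightarrow> tree list" where
  "root_word Leaf = []"
| "root_word (Node l r) = left_arm_rights l @ arm_lefts r"

fun forest_nodes :: "tree list \<Rightarrow> nat" where
  "forest_nodes [] = 0"
| "forest_nodes (t # ts) = nodes t + forest_nodes ts"

lemma forest_nodes_append [simp]: "forest_nodes (xs @ ys) = forest_nodes xs + forest_nodes ys"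
  by (induction xs) auto

lemma forest_nodes_replicate_Leaf [simp]: "forest_nodes (replicate m Leaf) = 0"
  by (induction m) auto

lemma nodes_foldl_Node: "nodes (foldl Node t xs) = nodes t + length xs + forest_nodes xs"
  by (induction xs arbitrary: t) auto

lemma nodes_arm_tree: "nodes (arm_tree xs) = length xs + forest_nodes xs"
  by (induction xs) auto

definition tree_at :: "tree list \<Rightarrow> nat \<Rightarrow> tree" where
  "tree_at D p = Node (foldl Node Leaf (take p D)) (arm_tree (drop p D))"

lemma tree_at_root_word: "tree_at (root_word (Node l r)) (length (left_arm_rights l)) = Node l r"
  by (simp add: tree_at_def)

lemma nodes_tree_at: "nodes (tree_at D p) = Suc (length D + forest_nodes D)"
proof -
  have "forest_nodes (take p D) + forest_nodes (drop p D) = forest_nodes D"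
    by (metis append_take_drop_id forest_nodes_append)
  then show ?thesis
    by (simp add: tree_at_def nodes_foldl_Node nodes_arm_tree)
qed

lemma rotL_tree_at: "p < length D \<Longrightarrow> rotL (tree_at D p) = Some (tree_at D (Suc p))"
  by (simp add: tree_at_def Cons_nth_drop_Suc[symmetric] take_Suc_conv_app_nth)

lemma rotR_tree_at: "p < length D \<Longrightarrow> rotR (tree_at D (Suc p)) = Some (tree_at D p)"
  by (simp add: tree_at_def Cons_nth_drop_Suc[symmetric] take_Suc_conv_app_nth)

lemma at_arm_rotR_arm_tree:
  "at_arm (length xs) rotR (arm_tree (xs @ Node B C # ys)) = Some (arm_tree (xs @ B # C # ys))"
  by (induction xs) auto

lemma at_arm_rotR_tree_at:
  assumes "length xs = p + j"
  shows "at_arm (Suc j) rotR (tree_at (xs @ Node B C # ys) p) = Some (tree_at (xs @ B # C # ys) p)"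
proof -
  have "length (drop p xs) = j"
    using assms by simp
  then show ?thesis
    using assms at_arm_rotR_arm_tree[of "drop p xs" B C ys] by (simp add: tree_at_def)
qed

lemma rra_path_to_tree_at_0:
  assumes "0 \<in> Ls" "p \<le> length D"
  shows "(rra_step Ls ^^ p) (tree_at D p) (tree_at D 0)"
  using assms(2)
proof (induction p)
  case 0
  show ?case by simp
next
  case (Suc p)
  have "rra_step Ls (tree_at D (Suc p)) (tree_at D p)"
    unfolding rra_step_def using assms(1) rotR_tree_at[of p D] Suc.prems by (intro bexI[of _ 0]) auto
  with Suc show ?case by (meson Suc_leD relpowp_Suc_I2)
qed

text \<open>The hypothesis on pre says that the root sits at position p and the node at level Suc j
  carries the first letter of tail.\<close>
lemma rra_path_flatten_tail:
  assumes "0 \<in> Ls" "Suc j \<in> Ls" "tail = [] \<or> length pre = p + j"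
  shows "\<exists>m \<le> length tail + 2 * forest_nodes tail - 2.
    (rra_step Ls ^^ m) (tree_at (pre @ tail) p)
      (tree_at (pre @ replicate (length tail + forest_nodes tail) Leaf)
        (p + (length tail + forest_nodes tail - 2)))"
  using assms(3)
proof (induction "length tail + 2 * forest_nodes tail" arbitrary: pre p tail rule: less_induct)
  case less
  show ?case
  proof (cases tail)
    case Nil
    then show ?thesis by auto
  next
    case (Cons t rest)
    with less.prems have pre_length: "length pre = p + j" by simp
    show ?thesis
    proof (cases t)
      case (Node B C)
      let ?tail' = "B # C # rest"
      have step: "rra_step Ls (tree_at (pre @ tail) p) (tree_at (pre @ ?tail') p)"
        unfolding rra_step_def using assms(2) at_arm_rotR_tree_at[OF pre_length] Cons Node by blast
      have size: "length ?tail' + forest_nodes ?tail' = length tail + forest_nodes tail"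
        "Suc (length ?tail' + 2 * forest_nodes ?tail') = length tail + 2 * forest_nodes tail"
        using Cons Node by simp_all
      obtain m where m: "m \<le> length ?tail' + 2 * forest_nodes ?tail' - 2"
        and path: "(rra_step Ls ^^ m) (tree_at (pre @ ?tail') p)
           (tree_at (pre @ replicate (length ?tail' + forest_nodes ?tail') Leaf)
             (p + (length ?tail' + forest_nodes ?tail' - 2)))"
        using less.hyps[of ?tail' pre p] pre_length size(2) by auto
      have "Suc m \<le> length tail + 2 * forest_nodes tail - 2"
        using m size(2) by simp
      with relpowp_Suc_I2[OF step path] show ?thesis
        unfolding size(1) by blast
    next
      case Leaf
      show ?thesis
      proof (cases "length rest + forest_nodes rest \<ge> 2")
        case True
        let ?pre' = "pre @ [Leaf]"
        have step: "rra_step Ls (tree_at (pre @ tail) p) (tree_at (?pre' @ rest) (Suc p))"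
          unfolding rra_step_def using assms(1) rotL_tree_at[of p "pre @ tail"] pre_length Cons Leaf
          by (intro bexI[of _ 0]) auto
        obtain m where m: "m \<le> length rest + 2 * forest_nodes rest - 2"
          and path: "(rra_step Ls ^^ m) (tree_at (?pre' @ rest) (Suc p))
             (tree_at (?pre' @ replicate (length rest + forest_nodes rest) Leaf)
               (Suc p + (length rest + forest_nodes rest - 2)))"
          using less.hyps[of rest ?pre' "Suc p"] pre_length Cons Leaf by auto
        moreover have "?pre' @ replicate (length rest + forest_nodes rest) Leaf
            = pre @ replicate (length tail + forest_nodes tail) Leaf"
          using Cons Leaf by (simp add: replicate_app_Cons_same)
        moreover have "Suc m \<le> length tail + 2 * forest_nodes tail - 2"
          using m True Cons Leaf by simp
        moreover have "Suc p + (length rest + forest_nodes rest - 2)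
            = p + (length tail + forest_nodes tail - 2)"
          using True Cons Leaf by simp
        ultimately show ?thesis
          using relpowp_Suc_I2[OF step path] by metis
      next
        case False
        then have "rest = [] \<or> rest = [Leaf]"
          by (cases rest rule: remdups_adj.cases) (auto simp: Suc_le_eq)
        then show ?thesis
          using Cons Leaf by (intro exI[of _ 0]) auto
      qed
    qed
  qed
qed

text \<open>Stopping two letters short of the end of the right arm saves the two rotations that
  bring the bound down to 2n - 4.\<close>
definition normal_tree :: "nat \<Rightarrow> tree list \<Rightarrow> tree" where
  "normal_tree n w =
    (let M = n - Suc (length w + forest_nodes w) in tree_at (w @ replicate M Leaf) (M - 2))"

lemma rra_path_normal_tree:
  assumes "0 \<in> Ls" "Suc j \<in> Ls" "nodes T = n" "3 \<le> n"
  shows "\<exists>m \<le> 2 * n - 4. (rra_step Ls ^^ m) T (normal_tree n (take j (root_word T)))"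
proof -
  obtain l r where T: "T = Node l r"
    using assms(3,4) by (cases T) auto
  define D where "D = root_word T"
  define p where "p = length (left_arm_rights l)"
  define w where "w = take j D"
  define tail where "tail = drop j D"
  define M where "M = length tail + forest_nodes tail"
  have T_at: "T = tree_at D p"
    using tree_at_root_word T by (simp add: D_def p_def)
  have n: "n = Suc (length D + forest_nodes D)"
    using assms(3) nodes_tree_at T_at by simp
  have D: "D = w @ tail"
    by (simp add: w_def tail_def)
  have "p \<le> length D"
    by (simp add: D_def p_def T)
  then have root_down: "(rra_step Ls ^^ p) T (tree_at (w @ tail) 0)"
    using rra_path_to_tree_at_0[OF assms(1)] T_at D by metis
  have "tail = [] \<or> length w = 0 + j"
    by (auto simp: w_def tail_def)
  from rra_path_flatten_tail[OF assms(1,2) this]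
  obtain m where m: "m \<le> length tail + 2 * forest_nodes tail - 2"
    and flatten: "(rra_step Ls ^^ m) (tree_at (w @ tail) 0) (tree_at (w @ replicate M Leaf) (M - 2))"
    unfolding M_def by auto
  have "M = n - Suc (length w + forest_nodes w)"
    using n D by (simp add: M_def)
  then have "tree_at (w @ replicate M Leaf) (M - 2) = normal_tree n w"
    by (simp add: normal_tree_def)
  moreover have "p + m \<le> 2 * n - 4"
  proof -
    have "length tail \<le> length D" "forest_nodes tail \<le> forest_nodes D"
      using D by simp_all
    then show ?thesis
      using \<open>p \<le> length D\<close> m n assms(4) by linarith
  qed
  ultimately show ?thesis
    using relpowp_trans[OF root_down flatten] by (auto simp: w_def D_def)
qed

lemma at_arm_rotR_iff_rotL: "at_arm k rotR T = Some T' \<longleftrightarrow> at_arm k rotL T' = Some T"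
proof (induction k arbitrary: T T')
  case 0
  show ?case
    by (cases T rule: rotR.cases; cases T' rule: rotL.cases) auto
next
  case (Suc k)
  show ?case
    using Suc.IH by (cases T; cases T') auto
qed

lemma rra_step_sym: "rra_step Ls T T' \<Longrightarrow> rra_step Ls T' T"
  unfolding rra_step_def using at_arm_rotR_iff_rotL by blast

lemma relpowp_sym:
  assumes "\<And>x y. R x y \<Longrightarrow> R y x"
  shows "(R ^^ m) x y \<Longrightarrow> (R ^^ m) y x"
proof (induction m arbitrary: y)
  case 0
  then show ?case by simp
next
  case (Suc m)
  then obtain z where "(R ^^ m) x z" "R z y"
    by (auto elim: relpowp_Suc_E)
  then show ?case
    using Suc.IH assms relpowp_Suc_I2 by metis
qed

lemma take_arm_lefts_at_arm:
  "at_arm i f r = Some r' \<Longrightarrow> take i (arm_lefts r') = take i (arm_lefts r)"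
proof (induction i arbitrary: r r')
  case 0
  show ?case by simp
next
  case (Suc i)
  then show ?case
    by (cases r) auto
qed

lemma root_word_rotR: "rotR T = Some T' \<Longrightarrow> root_word T' = root_word T"
  by (cases T rule: rotR.cases) auto

lemma root_word_rotL: "rotL T = Some T' \<Longrightarrow> root_word T' = root_word T"
  by (cases T rule: rotL.cases) auto

lemma rra_step_take_root_word:
  assumes "rra_step Ls T T'" "\<forall>i\<in>Ls. i = 0 \<or> Suc j \<le> i"
  shows "take j (root_word T') = take j (root_word T)"
proof -
  obtain i f where i: "i \<in> Ls" "f = rotR \<or> f = rotL" "at_arm i f T = Some T'"
    using assms(1) unfolding rra_step_def by blast
  show ?thesis
  proof (cases i)
    case 0
    then show ?thesis
      using i root_word_rotR root_word_rotL by auto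
  next
    case (Suc i')
    with i(3) obtain l r r' where T: "T = Node l r" "T' = Node l r'"
      and r': "at_arm i' f r = Some r'"
      by (cases T) auto
    have "j \<le> i'"
      using assms(2) i(1) Suc by fastforce
    then have "take (j - length (left_arm_rights l)) (arm_lefts r')
        = take (j - length (left_arm_rights l)) (arm_lefts r)"
      using take_arm_lefts_at_arm[OF r'] by (metis diff_le_self le_trans min.absorb1 take_take)
    then show ?thesis
      using T by (simp add: take_append)
  qed
qed

lemma rtranclp_rra_step_take_root_word:
  assumes "(rra_step Ls)\<^sup>*\<^sup>* T T'" "\<forall>i\<in>Ls. i = 0 \<or> Suc j \<le> i"
  shows "take j (root_word T') = take j (root_word T)"
  using assms(1) by induction (use rra_step_take_root_word[OF _ assms(2)] in auto)

theorem proposition3p8: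
  fixes idx :: "nat list" and T1 T2 :: tree and n :: nat
  assumes "idx \<noteq> []"
    and "sorted_wrt (<) idx"
    and "0 < hd idx"
    and "nodes T1 = n" and "nodes T2 = n" and "n \<ge> 3"
    and "rra_defined (insert 0 (set idx)) T1 T2"
  shows "d_RRA (insert 0 (set idx)) T1 T2 \<le> 4 * n - 8"
proof -
  let ?Ls = "insert 0 (set idx)"
  obtain j rest where idx: "idx = Suc j # rest"
    using assms(1,3) by (cases idx) (auto simp: gr0_conv_Suc)
  have levels: "\<forall>i\<in>?Ls. i = 0 \<or> Suc j \<le> i"
    using assms(2) idx by auto
  have "0 \<in> ?Ls" "Suc j \<in> ?Ls"
    using idx by auto
  note normal_paths = rra_path_normal_tree[OF this]
  from assms(7) obtain m where "(rra_step ?Ls ^^ m) T1 T2"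
    unfolding rra_defined_def by blast
  then have "take j (root_word T2) = take j (root_word T1)"
    using rtranclp_rra_step_take_root_word[OF relpowp_imp_rtranclp levels] by blast
  then obtain m1 m2 where "m1 \<le> 2 * n - 4" "m2 \<le> 2 * n - 4"
    and "(rra_step ?Ls ^^ m1) T1 (normal_tree n (take j (root_word T1)))"
    and "(rra_step ?Ls ^^ m2) (normal_tree n (take j (root_word T1))) T2"
    using normal_paths[OF assms(4,6)] normal_paths[OF assms(5,6)]
      relpowp_sym[of "rra_step ?Ls", OF rra_step_sym] by metis
  then have "d_RRA ?Ls T1 T2 \<le> m1 + m2"
    unfolding d_RRA_def by (metis relpowp_trans Least_le)
  then show ?thesis
    using \<open>m1 \<le> 2 * n - 4\<close> \<open>m2 \<le> 2 * n - 4\<close> by linarith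
qed

end
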